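(* Let $X$ be the solution of $$\mathrm{d}X(t)=\sum_{m=0}^M\big(A_mX(t)+g_m(t,X(t))\big)\star\mathrm{d}W_m(t),\qquad X(t_0)=x_0,$$ where the matrices $A_0,\dots,A_M\in\mathbb{R}^{d\times d}$ pairwise commute. Let $V^0_n$, $n=0,\dots,N$, be the numerical approximation of the globally transformed SDE for $V^0$ (defined in the context) by some one-step method of mean-square order $p$, i.e. there is $c\in\mathbb{R}$ such that for all $N\in\mathbb{N}$ and $n\in\{0,\dots,N\}$, $\sqrt{\mathbb{E}\|V^0_n-V^0(t_n)\|_2^2}\le ch^p$. Assume moreover that the Wiener approximations are exact, $W^n=W(t_n)$, so that $\bar L^0_n=L^0(t_n)$. Then there exists $\tilde c\in\mathbb{R}$ such that the approximation $Y_n=e^{L^0(t_n)}V^0_n$ satisfies, for all $N\in\mathbb{N}$ and $n\in\{0,\dots,N\}$, $$\mathbb{E}\,\|Y_n-X(t_n)\|_2\le\tilde ch^p.$$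
   Context: Setting: $d,M\in\mathbb{N}$, $t_0<T$; $W_1,\dots,W_M$ independent scalar Wiener processes, $W_0(t)=t$, $W(t)=(W_m(t))_{m=0}^M$; $g_m:[t_0,T]\times\mathbb{R}^d\to\mathbb{R}^d$ such that the SDE has a unique solution. The integrals $\star\,\mathrm{d}W_m$ are all Itô ($\gamma^\star=\tfrac12$) or all Stratonovich ($\gamma^\star=0$). Equidistant grid $h=(T-t_0)/N$, $t_n=t_0+nh$. Define $\tilde g_0=g_0-2\gamma^\star\sum_{m=1}^MA_mg_m$, $\tilde g_m=g_m$ ($m\ge1$), $L^0(t)=(A_0-\gamma^\star\sum_{m=1}^MA_m^2)(t-t_0)+\sum_{m=1}^MA_m(W_m(t)-W_m(t_0))$, and $V^0(t)=e^{-L^0(t)}X(t)$; $V^0$ solves $\mathrm{d}V^0=\sum_{m=0}^M e^{-L^0(t)}\tilde g_m(t,e^{L^0(t)}V^0)\star\mathrm{d}W_m$, $V^0(t_0)=x_0$ (the globally transformed SDE). If $W^n$ denotes the approximation of $W(t_n)$ used by the one-step method, $\bar L^0_n=(A_0-\gamma^\star\sum_{m=1}^MA_m^2)(t_n-t_0)+\sum_{m=1}^MA_m(W^n_m-W^0_m)$. $\|\cdot\|_2$ is the Euclidean norm. *)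

theory Defs
  imports "HOL-Probability.Probability"
begin

definition matpow :: "real^'n^'n \<Rightarrow> nat \<Rightarrow> real^'n^'n" where
  "matpow A k = (((**) A) ^^ k) (mat 1)"

definition mat_exp :: "real^'n^'n \<Rightarrow> real^'n^'n" where
  "mat_exp A = (\<Sum>k. (1 / fact k) *\<^sub>R matpow A k)"

definition wiener_process_on :: "'a measure \<Rightarrow> real set \<Rightarrow> (real \<Rightarrow> 'a \<Rightarrow> real) \<Rightarrow> bool" where
  "wiener_process_on M S W \<longleftrightarrow>
     prob_space M \<and>
     (\<forall>t\<in>S. W t \<in> borel_measurable M) \<and>
     (AE \<omega> in M. continuous_on S (\<lambda>t. W t \<omega>)) \<and>
     (\<forall>s\<in>S. \<forall>t\<in>S. s < t \<longrightarrow>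
        distributed M lborel (\<lambda>\<omega>. W t \<omega> - W s \<omega>) (\<lambda>x. ennreal (normal_density 0 (sqrt (t - s)) x))) \<and>
     (\<forall>(k::nat) (ts::nat \<Rightarrow> real). (\<forall>i\<le>k. ts i \<in> S) \<and> (\<forall>i<k. ts i < ts (Suc i)) \<longrightarrow>
        prob_space.indep_vars M (\<lambda>_. borel) (\<lambda>i \<omega>. W (ts (Suc i)) \<omega> - W (ts i) \<omega>) {..<k})"

end

theory Submission
  imports Defs
begin

text \<open>
  Since V0(t) = exp(-L0(t)) X(t), the error of the back-transformed scheme is
  Y_n - X(t_n) = exp(L0(t_n)) (V0_n - V0(t_n)), whose norm is at most
  |I| exp(|L0(t_n)|) |V0_n - V0(t_n)| for the Frobenius norm. Now |L0(t)| is bounded by a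
  constant plus the sum of |A_m| |W_m(t) - W_m(t0)|, and Gaussian increments have exponential
  moments of all orders, so the second moment of exp(|L0(t_n)|) is bounded uniformly in n and N.
  The Cauchy-Schwarz inequality then bounds the mean error by this moment times the mean-square
  error c h^p of the scheme for V0.
\<close>

lemma norm_matrix_vector_mult_le:
  fixes A :: "real^'n^'m"
  shows "norm (A *v x) \<le> norm A * norm x"
proof -
  have "norm (A *v x) = L2_set (\<lambda>i. \<bar>A $ i \<bullet> x\<bar>) UNIV"
    unfolding norm_vec_def by (simp add: matrix_vector_mul_component)
  also have "\<dots> \<le> L2_set (\<lambda>i. norm (A $ i) * norm x) UNIV"
    by (intro L2_set_mono Cauchy_Schwarz_ineq2) simp
  also have "\<dots> = norm A * norm x"
    by (simp add: norm_vec_def L2_set_left_distrib)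
  finally show ?thesis .
qed

lemma matrix_mult_row:
  "(A ** B) $ i = (\<Sum>k\<in>UNIV. A $ i $ k *s B $ k)"
  by (simp add: vec_eq_iff matrix_matrix_mult_def)

lemma norm_matrix_mult_le:
  fixes A :: "real^'n^'m" and B :: "real^'p^'n"
  shows "norm (A ** B) \<le> norm A * norm B"
proof -
  have row: "norm ((A ** B) $ i) \<le> norm (A $ i) * norm B" for i
  proof -
    have "norm ((A ** B) $ i) \<le> (\<Sum>k\<in>UNIV. \<bar>A $ i $ k\<bar> * \<bar>norm (B $ k)\<bar>)"
      unfolding matrix_mult_row by (rule order_trans[OF norm_sum]) (simp add: scalar_mult_eq_scaleR)
    also have "\<dots> \<le> L2_set (\<lambda>k. norm (A $ i $ k)) UNIV * L2_set (\<lambda>k. norm (B $ k)) UNIV"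
      using L2_set_mult_ineq[of "\<lambda>k. norm (A $ i $ k)" "\<lambda>k. norm (B $ k)" UNIV] by simp
    also have "\<dots> = norm (A $ i) * norm B"
      by (simp only: norm_vec_def)
    finally show ?thesis .
  qed
  have "norm (A ** B) \<le> L2_set (\<lambda>i. norm (A $ i) * norm B) UNIV"
    unfolding norm_vec_def[of "A ** B"] by (intro L2_set_mono row) simp
  also have "\<dots> = norm A * norm B"
    by (simp add: norm_vec_def L2_set_left_distrib)
  finally show ?thesis .
qed

lemma matpow_0 [simp]: "matpow A 0 = mat 1"
  by (simp add: matpow_def)

lemma matpow_Suc: "matpow A (Suc k) = A ** matpow A k"
  by (simp add: matpow_def)

lemma matpow_add: "matpow A (i + j) = matpow A i ** matpow A j"
  by (induction i) (simp_all add: matpow_Suc matrix_mul_assoc)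

lemma matrix_mult_uminus_left:
  fixes A :: "'a::ring_1^'n^'m"
  shows "(- A) ** B = - (A ** B)"
  by (simp add: matrix_matrix_mult_def vec_eq_iff sum_negf)

lemma matpow_uminus:
  fixes A :: "real^'n^'n"
  shows "matpow (- A) k = (-1) ^ k *\<^sub>R matpow A k"
  by (induction k)
    (simp_all add: matpow_Suc matrix_mult_uminus_left matrix_scalar_ac scalar_matrix_assoc[symmetric])

lemma norm_matpow_le:
  fixes A :: "real^'n^'n"
  shows "norm (matpow A k) \<le> norm (mat 1 :: real^'n^'n) * norm A ^ k"
proof (induction k)
  case (Suc k)
  have "norm (matpow A (Suc k)) \<le> norm A * norm (matpow A k)"
    unfolding matpow_Suc by (rule norm_matrix_mult_le)
  also have "\<dots> \<le> norm A * (norm (mat 1 :: real^'n^'n) * norm A ^ k)"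
    by (intro mult_left_mono Suc.IH) simp
  finally show ?case
    by (simp add: mult_ac)
qed simp

lemma norm_mat_exp_series_le:
  fixes A :: "real^'n^'n"
  shows "norm ((1 / fact k) *\<^sub>R matpow A k) \<le> norm (mat 1 :: real^'n^'n) * (norm A ^ k /\<^sub>R fact k)"
proof -
  have "norm (matpow A k) / fact k \<le> norm (mat 1 :: real^'n^'n) * norm A ^ k / fact k"
    by (intro divide_right_mono norm_matpow_le) simp
  then show ?thesis
    by (simp add: divide_inverse mult_ac)
qed

lemma summable_norm_mat_exp_series:
  fixes A :: "real^'n^'n"
  shows "summable (\<lambda>k. norm ((1 / fact k) *\<^sub>R matpow A k))"
  by (rule summable_comparison_test'[OF summable_mult[OF summable_exp_generic]])
    (use norm_mat_exp_series_le in simp)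

lemma norm_mat_exp_le:
  fixes A :: "real^'n^'n"
  shows "norm (mat_exp A) \<le> norm (mat 1 :: real^'n^'n) * exp (norm A)"
proof -
  have "norm (mat_exp A) \<le> (\<Sum>k. norm ((1 / fact k) *\<^sub>R matpow A k))"
    unfolding mat_exp_def by (rule summable_norm[OF summable_norm_mat_exp_series])
  also have "\<dots> \<le> norm (mat 1 :: real^'n^'n) * exp (norm A)"
    by (rule sums_le[OF norm_mat_exp_series_le summable_sums[OF summable_norm_mat_exp_series]
          sums_mult[OF exp_converges]])
  finally show ?thesis .
qed

lemma norm_mat_exp_mult_le:
  fixes A :: "real^'n^'n"
  shows "norm (mat_exp A *v x) \<le> norm (mat 1 :: real^'n^'n) * exp (norm A) * norm x"
  by (rule order_trans[OF norm_matrix_vector_mult_le mult_right_mono[OF norm_mat_exp_le]]) simp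

lemma sums_vecI:
  assumes "\<And>i. (\<lambda>n. f n $ i) sums s $ i"
  shows "f sums s"
  using assms unfolding sums_def by (intro vec_tendstoI) simp

lemma summable_norm_vec_nth:
  fixes f :: "nat \<Rightarrow> 'a::real_normed_vector^'n"
  assumes "summable (\<lambda>k. norm (f k))"
  shows "summable (\<lambda>k. norm (f k $ i))"
  by (rule summable_comparison_test'[OF assms]) (simp add: Finite_Cartesian_Product.norm_nth_le)

lemma suminf_vec_nth:
  fixes f :: "nat \<Rightarrow> 'a::real_normed_vector^'n"
  assumes "summable f"
  shows "(\<Sum>k. f k) $ i = (\<Sum>k. f k $ i)"
  using bounded_linear.suminf[OF bounded_linear_vec_nth assms] .

lemma matrix_mult_Cauchy_product_sums:
  fixes a :: "nat \<Rightarrow> real^'n^'m" and b :: "nat \<Rightarrow> real^'p^'n"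
  assumes a: "summable (\<lambda>k. norm (a k))" and b: "summable (\<lambda>k. norm (b k))"
  shows "(\<lambda>k. \<Sum>l\<le>k. a l ** b (k - l)) sums ((\<Sum>k. a k) ** (\<Sum>k. b k))"
proof (intro sums_vecI)
  fix i j
  have a_entry: "summable (\<lambda>k. norm (a k $ i $ r))" for r
    by (intro summable_norm_vec_nth a)
  have b_entry: "summable (\<lambda>k. norm (b k $ r $ j))" for r
    by (intro summable_norm_vec_nth b)
  have "(\<lambda>k. \<Sum>r\<in>UNIV. \<Sum>l\<le>k. a l $ i $ r * b (k - l) $ r $ j)
      sums (\<Sum>r\<in>UNIV. (\<Sum>k. a k $ i $ r) * (\<Sum>k. b k $ r $ j))"
    by (intro sums_sum Cauchy_product_sums a_entry b_entry)
  moreover have "(\<Sum>k. a k) $ i $ r = (\<Sum>k. a k $ i $ r)" for r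
    using a by (simp add: suminf_vec_nth summable_norm_cancel summable_vec_nth)
  moreover have "(\<Sum>k. b k) $ r $ j = (\<Sum>k. b k $ r $ j)" for r
    using b by (simp add: suminf_vec_nth summable_norm_cancel summable_vec_nth)
  ultimately show "(\<lambda>k. (\<Sum>l\<le>k. a l ** b (k - l)) $ i $ j) sums ((\<Sum>k. a k) ** (\<Sum>k. b k)) $ i $ j"
    by (simp add: matrix_matrix_mult_def sum.swap[where B = UNIV])
qed

lemma sum_alternating_fact:
  "(\<Sum>i\<le>k. (-1::real) ^ (k - i) / (fact i * fact (k - i))) = (if k = 0 then 1 else 0)"
proof -
  have "(\<Sum>i\<le>k. (-1::real) ^ (k - i) / (fact i * fact (k - i)))
      = (1 / fact k) * (\<Sum>i\<le>k. of_nat (k choose i) * 1 ^ i * (-1::real) ^ (k - i))"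
    by (simp add: sum_distrib_left binomial_fact)
  also have "\<dots> = (1 / fact k) * (1 + (-1::real)) ^ k"
    by (simp only: binomial_ring)
  finally show ?thesis
    by simp
qed

lemma mat_exp_mult_uminus:
  fixes A :: "real^'n^'n"
  shows "mat_exp A ** mat_exp (- A) = mat 1"
proof -
  define a where "a B k = (1 / fact k) *\<^sub>R matpow B k" for B :: "real^'n^'n" and k
  have "(\<lambda>k. \<Sum>i\<le>k. a A i ** a (- A) (k - i)) sums (mat_exp A ** mat_exp (- A))"
    unfolding mat_exp_def a_def by (intro matrix_mult_Cauchy_product_sums summable_norm_mat_exp_series)
  moreover have "(\<Sum>i\<le>k. a A i ** a (- A) (k - i)) = (if k = 0 then mat 1 else 0)" for k
  proof -
    have "(\<Sum>i\<le>k. a A i ** a (- A) (k - i))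
        = (\<Sum>i\<le>k. ((-1::real) ^ (k - i) / (fact i * fact (k - i))) *\<^sub>R matpow A k)"
      unfolding a_def by (intro sum.cong refl)
        (simp add: matpow_uminus matrix_scalar_ac scalar_matrix_assoc[symmetric] matpow_add[symmetric])
    also have "\<dots> = (if k = 0 then mat 1 else 0)"
      by (simp add: scaleR_sum_left[symmetric] sum_alternating_fact)
    finally show ?thesis .
  qed
  ultimately have "(\<lambda>k. if k = 0 then mat 1 else 0) sums (mat_exp A ** mat_exp (- A))"
    by simp
  then show ?thesis
    using sums_single[of 0 "\<lambda>_. mat 1 :: real^'n^'n"] by (simp add: sums_unique2)
qed

lemma mat_exp_cancel:
  fixes A :: "real^'n^'n"
  shows "mat_exp A *v (mat_exp (- A) *v x) = x"
  by (simp add: matrix_vector_mul_assoc mat_exp_mult_uminus)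

lemma norm_mat_exp_mult_diff_le:
  fixes L :: "real^'n^'n"
  shows "norm (mat_exp L *v v - x) \<le> norm (mat 1 :: real^'n^'n) * exp (norm L) * norm (v - mat_exp (- L) *v x)"
proof -
  have "mat_exp L *v v - x = mat_exp L *v (v - mat_exp (- L) *v x)"
    by (simp add: matrix_vector_mult_diff_distrib mat_exp_cancel)
  then show ?thesis
    by (simp only: norm_mat_exp_mult_le)
qed

lemma normal_density_mult_exp_abs_le:
  fixes s b x :: real
  assumes s: "0 < s" and b: "0 \<le> b"
  shows "normal_density 0 (sqrt s) x * exp (b * \<bar>x\<bar>)
     \<le> sqrt 2 * exp (b\<^sup>2 * s) * normal_density 0 (sqrt 2 * sqrt s) x"
proof -
  have square: "- x\<^sup>2 / (2 * s) + b * \<bar>x\<bar> \<le> b\<^sup>2 * s - x\<^sup>2 / (4 * s)"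
  proof -
    have "b\<^sup>2 * s - x\<^sup>2 / (4 * s) - (- x\<^sup>2 / (2 * s) + b * \<bar>x\<bar>) = (2 * b * s - \<bar>x\<bar>)\<^sup>2 / (4 * s)"
      using s by (simp add: field_simps power2_eq_square abs_mult_self_eq)
    moreover have "0 \<le> (2 * b * s - \<bar>x\<bar>)\<^sup>2 / (4 * s)"
      using s by simp
    ultimately show ?thesis
      by linarith
  qed
  have lhs: "normal_density 0 (sqrt s) x * exp (b * \<bar>x\<bar>) = exp (- x\<^sup>2 / (2 * s) + b * \<bar>x\<bar>) / sqrt (2 * pi * s)"
    using s by (simp add: normal_density_def mult_exp_exp)
  have "sqrt (2 * pi * (sqrt 2 * sqrt s)\<^sup>2) = sqrt 2 * sqrt (2 * pi * s)"
    using s by (simp add: power_mult_distrib real_sqrt_mult[symmetric] mult_ac)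
  then have rhs: "sqrt 2 * exp (b\<^sup>2 * s) * normal_density 0 (sqrt 2 * sqrt s) x
      = exp (b\<^sup>2 * s - x\<^sup>2 / (4 * s)) / sqrt (2 * pi * s)"
    using s by (simp add: normal_density_def mult_exp_exp power_mult_distrib exp_diff)
  show ?thesis
    unfolding lhs rhs using square s by (simp add: divide_right_mono)
qed

lemma nn_integral_exp_abs_normal_le:
  assumes Z: "distributed M lborel Z (\<lambda>x. ennreal (normal_density 0 (sqrt s) x))"
    and s: "0 < s" and b: "0 \<le> b"
  shows "(\<integral>\<^sup>+\<omega>. ennreal (exp (b * \<bar>Z \<omega>\<bar>)) \<partial>M) \<le> ennreal (sqrt 2 * exp (b\<^sup>2 * s))"
proof -
  have "(\<integral>\<^sup>+\<omega>. ennreal (exp (b * \<bar>Z \<omega>\<bar>)) \<partial>M)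
      = (\<integral>\<^sup>+x. ennreal (normal_density 0 (sqrt s) x * exp (b * \<bar>x\<bar>)) \<partial>lborel)"
    using distributed_nn_integral[OF Z, of "\<lambda>x. ennreal (exp (b * \<bar>x\<bar>))"]
    by (simp add: ennreal_mult)
  also have "\<dots> \<le> (\<integral>\<^sup>+x. ennreal (sqrt 2 * exp (b\<^sup>2 * s)) * ennreal (normal_density 0 (sqrt 2 * sqrt s) x) \<partial>lborel)"
    by (intro nn_integral_mono)
      (simp add: ennreal_mult[symmetric] ennreal_leI normal_density_mult_exp_abs_le s b)
  also have "\<dots> = ennreal (sqrt 2 * exp (b\<^sup>2 * s)) * (\<integral>\<^sup>+x. ennreal (normal_density 0 (sqrt 2 * sqrt s) x) \<partial>lborel)"
    by (simp add: nn_integral_cmult)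
  also have "(\<integral>\<^sup>+x. ennreal (normal_density 0 (sqrt 2 * sqrt s) x) \<partial>lborel) = 1"
    using s by (subst nn_integral_eq_integral) auto
  finally show ?thesis
    by simp
qed

lemma borel_measurable_abs_wiener_increment:
  assumes "wiener_process_on M {t0..T} W" "t \<in> {t0..T}"
  shows "(\<lambda>\<omega>. \<bar>W t \<omega> - W t0 \<omega>\<bar>) \<in> borel_measurable M"
proof -
  have [measurable]: "W t \<in> borel_measurable M" "W t0 \<in> borel_measurable M"
    using assms unfolding wiener_process_on_def by auto
  show ?thesis
    by measurable
qed

lemma nn_integral_exp_abs_wiener_increment_le:
  assumes W: "wiener_process_on M {t0..T} W" and t: "t \<in> {t0..T}" and b: "0 \<le> b"
  shows "(\<integral>\<^sup>+\<omega>. ennreal (exp (b * \<bar>W t \<omega> - W t0 \<omega>\<bar>)) \<partial>M) \<le> ennreal (sqrt 2 * exp (b\<^sup>2 * (T - t0)))"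
proof (cases "t = t0")
  case True
  have "1 \<le> sqrt 2 * exp (b\<^sup>2 * (T - t0))"
    by (rule order_trans[OF _ mult_mono[of 1 "sqrt 2" 1]]) (use t in auto)
  with True W show ?thesis
    by (simp add: wiener_process_on_def prob_space.emeasure_space_1)
next
  case False
  with t have "t0 < t" "t0 \<in> {t0..T}"
    by auto
  with W t have Z: "distributed M lborel (\<lambda>\<omega>. W t \<omega> - W t0 \<omega>)
      (\<lambda>x. ennreal (normal_density 0 (sqrt (t - t0)) x))"
    unfolding wiener_process_on_def by blast
  have "(\<integral>\<^sup>+\<omega>. ennreal (exp (b * \<bar>W t \<omega> - W t0 \<omega>\<bar>)) \<partial>M) \<le> ennreal (sqrt 2 * exp (b\<^sup>2 * (t - t0)))"
    using \<open>t0 < t\<close> b by (intro nn_integral_exp_abs_normal_le[OF Z]) auto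
  also have "\<dots> \<le> ennreal (sqrt 2 * exp (b\<^sup>2 * (T - t0)))"
    using t by (intro ennreal_leI mult_left_mono) (auto intro: mult_left_mono)
  finally show ?thesis .
qed

lemma exp_sum_le_sum_exp_card:
  fixes x :: "'i \<Rightarrow> real"
  assumes "finite I" "I \<noteq> {}"
  shows "exp (\<Sum>m\<in>I. x m) \<le> (\<Sum>m\<in>I. exp (real (card I) * x m))"
proof -
  have "Max (x ` I) \<in> x ` I"
    using assms by (intro Max_in) auto
  then obtain j where j: "j \<in> I" "x j = Max (x ` I)"
    by auto
  have "(\<Sum>m\<in>I. x m) \<le> real (card I) * x j"
    using assms j by (intro sum_bounded_above) auto
  then have "exp (\<Sum>m\<in>I. x m) \<le> exp (real (card I) * x j)"
    by simp
  also have "\<dots> \<le> (\<Sum>m\<in>I. exp (real (card I) * x m))"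
    using assms j by (intro member_le_sum) auto
  finally show ?thesis .
qed

lemma nn_integral_exp_sum_abs_wiener_increments_le:
  assumes I: "finite I" "I \<noteq> {}"
    and W: "\<And>m. m \<in> I \<Longrightarrow> wiener_process_on M {t0..T} (W m)"
    and t: "t \<in> {t0..T}" and b: "\<And>m. m \<in> I \<Longrightarrow> 0 \<le> b m"
  shows "(\<integral>\<^sup>+\<omega>. ennreal (exp (\<Sum>m\<in>I. b m * \<bar>W m t \<omega> - W m t0 \<omega>\<bar>)) \<partial>M)
    \<le> ennreal (\<Sum>m\<in>I. sqrt 2 * exp ((real (card I) * b m)\<^sup>2 * (T - t0)))"
proof -
  have measurable: "(\<lambda>\<omega>. ennreal (exp (real (card I) * b m * \<bar>W m t \<omega> - W m t0 \<omega>\<bar>))) \<in> borel_measurable M"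
    if "m \<in> I" for m
    using borel_measurable_abs_wiener_increment[OF W[OF that] t] by measurable
  have "(\<integral>\<^sup>+\<omega>. ennreal (exp (\<Sum>m\<in>I. b m * \<bar>W m t \<omega> - W m t0 \<omega>\<bar>)) \<partial>M)
      \<le> (\<integral>\<^sup>+\<omega>. (\<Sum>m\<in>I. ennreal (exp (real (card I) * b m * \<bar>W m t \<omega> - W m t0 \<omega>\<bar>))) \<partial>M)"
    using exp_sum_le_sum_exp_card[OF I]
    by (intro nn_integral_mono) (simp add: ennreal_leI mult.assoc)
  also have "\<dots> = (\<Sum>m\<in>I. \<integral>\<^sup>+\<omega>. ennreal (exp (real (card I) * b m * \<bar>W m t \<omega> - W m t0 \<omega>\<bar>)) \<partial>M)"
    by (intro nn_integral_sum measurable)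
  also have "\<dots> \<le> (\<Sum>m\<in>I. ennreal (sqrt 2 * exp ((real (card I) * b m)\<^sup>2 * (T - t0))))"
    by (intro sum_mono nn_integral_exp_abs_wiener_increment_le W t mult_nonneg_nonneg b) simp_all
  also have "\<dots> = ennreal (\<Sum>m\<in>I. sqrt 2 * exp ((real (card I) * b m)\<^sup>2 * (T - t0)))"
    by simp
  finally show ?thesis .
qed

lemma ennreal_le_of_power2_le:
  fixes x y :: ennreal
  assumes "x\<^sup>2 \<le> y\<^sup>2"
  shows "x \<le> y"
proof (cases x rule: ennreal_cases)
  case x: (real r)
  show ?thesis
  proof (cases y rule: ennreal_cases)
    case y: (real s)
    with x assms have "r\<^sup>2 \<le> s\<^sup>2"
      by (simp add: ennreal_power)
    then show ?thesis
      unfolding x y by (rule ennreal_leI[OF power2_le_imp_le]) (use y in auto)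
  next
    case top then show ?thesis by simp
  qed
next
  case top
  with assms have "top \<le> y\<^sup>2"
    by simp
  then have "y = top"
    unfolding top_unique power_eq_top_ennreal by simp
  then show ?thesis
    by simp
qed

lemma nn_integral_mult_le_of_square_bounds:
  fixes f g :: "'a \<Rightarrow> real"
  assumes [measurable]: "f \<in> borel_measurable M" "g \<in> borel_measurable M"
    and nonneg: "\<And>x. 0 \<le> f x" "\<And>x. 0 \<le> g x" "0 \<le> a" "0 \<le> b"
    and f: "(\<integral>\<^sup>+x. ennreal ((f x)\<^sup>2) \<partial>M) \<le> ennreal (a\<^sup>2)"
    and g: "(\<integral>\<^sup>+x. ennreal ((g x)\<^sup>2) \<partial>M) \<le> ennreal (b\<^sup>2)"
  shows "(\<integral>\<^sup>+x. ennreal (f x * g x) \<partial>M) \<le> ennreal (a * b)"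
proof (rule ennreal_le_of_power2_le)
  have "(\<integral>\<^sup>+x. ennreal (f x * g x) \<partial>M)\<^sup>2 = (\<integral>\<^sup>+x. ennreal (f x) * ennreal (g x) \<partial>M)\<^sup>2"
    by (simp add: ennreal_mult nonneg)
  also have "\<dots> \<le> (\<integral>\<^sup>+x. ennreal (f x) ^ 2 \<partial>M) * (\<integral>\<^sup>+x. ennreal (g x) ^ 2 \<partial>M)"
    by (rule Cauchy_Schwarz_nn_integral) measurable
  also have "\<dots> = (\<integral>\<^sup>+x. ennreal ((f x)\<^sup>2) \<partial>M) * (\<integral>\<^sup>+x. ennreal ((g x)\<^sup>2) \<partial>M)"
    by (simp add: ennreal_power nonneg)
  also have "\<dots> \<le> ennreal (a\<^sup>2) * ennreal (b\<^sup>2)"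
    by (rule mult_mono[OF f g]) simp_all
  also have "\<dots> = (ennreal (a * b))\<^sup>2"
    by (simp add: ennreal_power ennreal_mult[symmetric] power_mult_distrib nonneg)
  finally show "(\<integral>\<^sup>+x. ennreal (f x * g x) \<partial>M)\<^sup>2 \<le> (ennreal (a * b))\<^sup>2" .
qed

lemma norm_scaleR_add_sum_scaleR_le:
  "norm (a *\<^sub>R B + (\<Sum>m\<in>I. w m *\<^sub>R A m)) \<le> \<bar>a\<bar> * norm B + (\<Sum>m\<in>I. norm (A m) * \<bar>w m\<bar>)"
  by (rule order_trans[OF norm_triangle_ineq add_mono[OF _ order_trans[OF norm_sum]]])
    (simp_all add: mult.commute)

lemma grid_point_mem_interval:
  fixes t0 T :: real
  assumes "t0 < T" "1 \<le> N" "n \<le> N"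
  shows "t0 + real n * ((T - t0) / real N) \<in> {t0..T}"
proof -
  have "real n * ((T - t0) / real N) \<le> real N * ((T - t0) / real N)"
    using assms by (intro mult_right_mono) auto
  then show ?thesis
    using assms by auto
qed

lemma nn_integral_square_le_of_sqrt_integral_le:
  fixes f :: "'a \<Rightarrow> real"
  assumes integrable: "integrable M (\<lambda>\<omega>. (f \<omega>)\<^sup>2)"
    and e: "sqrt (\<integral>\<omega>. (f \<omega>)\<^sup>2 \<partial>M) \<le> e"
  shows "(\<integral>\<^sup>+\<omega>. ennreal ((f \<omega>)\<^sup>2) \<partial>M) \<le> ennreal (e\<^sup>2)" "0 \<le> e"
proof -
  show "0 \<le> e"
    by (rule order_trans[OF real_sqrt_ge_zero e]) (simp add: integral_nonneg_AE)
  have "(\<integral>\<^sup>+\<omega>. ennreal ((f \<omega>)\<^sup>2) \<partial>M) = ennreal (\<integral>\<omega>. (f \<omega>)\<^sup>2 \<partial>M)"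
    using integrable by (intro nn_integral_eq_integral) auto
  also have "\<dots> \<le> ennreal (e\<^sup>2)"
    using e by (intro ennreal_leI sqrt_le_D)
  finally show "(\<integral>\<^sup>+\<omega>. ennreal ((f \<omega>)\<^sup>2) \<partial>M) \<le> ennreal (e\<^sup>2)" .
qed

lemma nn_integral_mat_exp_transform_error_le:
  fixes L :: "'a \<Rightarrow> real^'n^'n" and v x :: "'a \<Rightarrow> real^'n" and S :: "'a \<Rightarrow> real"
  assumes [measurable]: "S \<in> borel_measurable M"
    and L: "\<And>\<omega>. norm (L \<omega>) \<le> \<beta> + S \<omega>"
    and S: "(\<integral>\<^sup>+\<omega>. ennreal (exp (2 * S \<omega>)) \<partial>M) \<le> ennreal K" "0 \<le> K"
    and integrable: "integrable M (\<lambda>\<omega>. (norm (v \<omega> - mat_exp (- L \<omega>) *v x \<omega>))\<^sup>2)"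
    and e: "sqrt (\<integral>\<omega>. (norm (v \<omega> - mat_exp (- L \<omega>) *v x \<omega>))\<^sup>2 \<partial>M) \<le> e"
  shows "(\<integral>\<^sup>+\<omega>. ennreal (norm (mat_exp (L \<omega>) *v v \<omega> - x \<omega>)) \<partial>M)
    \<le> ennreal (norm (mat 1 :: real^'n^'n) * exp \<beta> * (sqrt K * e))"
proof -
  define D where "D \<omega> = norm (v \<omega> - mat_exp (- L \<omega>) *v x \<omega>)" for \<omega>
  define C where "C = norm (mat 1 :: real^'n^'n) * exp \<beta>"
  have D_measurable [measurable]: "D \<in> borel_measurable M"
  proof -
    have [measurable]: "(\<lambda>\<omega>. (D \<omega>)\<^sup>2) \<in> borel_measurable M"
      using integrable unfolding D_def by auto
    have "(\<lambda>\<omega>. sqrt ((D \<omega>)\<^sup>2)) \<in> borel_measurable M"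
      by measurable
    then show ?thesis
      by (simp add: D_def[abs_def])
  qed
  have D_nonneg: "0 \<le> D \<omega>" for \<omega>
    by (simp add: D_def)
  have D: "(\<integral>\<^sup>+\<omega>. ennreal ((D \<omega>)\<^sup>2) \<partial>M) \<le> ennreal (e\<^sup>2)" "0 \<le> e"
    using nn_integral_square_le_of_sqrt_integral_le[OF integrable e] unfolding D_def by simp_all
  have pointwise: "norm (mat_exp (L \<omega>) *v v \<omega> - x \<omega>) \<le> C * (exp (S \<omega>) * D \<omega>)" for \<omega>
  proof -
    have "norm (mat_exp (L \<omega>) *v v \<omega> - x \<omega>) \<le> norm (mat 1 :: real^'n^'n) * exp (norm (L \<omega>)) * D \<omega>"
      unfolding D_def by (rule norm_mat_exp_mult_diff_le)
    also have "\<dots> \<le> norm (mat 1 :: real^'n^'n) * exp (\<beta> + S \<omega>) * D \<omega>"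
      using L by (intro mult_right_mono mult_left_mono) (auto simp: D_def)
    finally show ?thesis
      by (simp add: C_def exp_add mult_ac)
  qed
  have "(\<integral>\<^sup>+\<omega>. ennreal (norm (mat_exp (L \<omega>) *v v \<omega> - x \<omega>)) \<partial>M)
      \<le> (\<integral>\<^sup>+\<omega>. ennreal C * ennreal (exp (S \<omega>) * D \<omega>) \<partial>M)"
    using pointwise by (intro nn_integral_mono) (simp add: ennreal_mult[symmetric] C_def D_def ennreal_leI)
  also have "\<dots> = ennreal C * (\<integral>\<^sup>+\<omega>. ennreal (exp (S \<omega>) * D \<omega>) \<partial>M)"
    by (rule nn_integral_cmult) measurable
  also have "\<dots> \<le> ennreal C * ennreal (sqrt K * e)"
  proof (intro mult_left_mono nn_integral_mult_le_of_square_bounds)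
    show "(\<integral>\<^sup>+\<omega>. ennreal ((exp (S \<omega>))\<^sup>2) \<partial>M) \<le> ennreal ((sqrt K)\<^sup>2)"
      using S by (simp add: exp_double[symmetric])
  qed (use D S D_measurable D_nonneg in auto)
  finally show ?thesis
    using D(2) S(2) by (simp add: C_def ennreal_mult[symmetric] mult_ac)
qed

theorem lemma2:
  fixes M :: "'a measure"
    and t0 T :: real and MM :: nat and \<gamma> :: real and p :: real
    and A :: "nat \<Rightarrow> real^'d^'d"
    and W :: "nat \<Rightarrow> real \<Rightarrow> 'a \<Rightarrow> real"
    and X :: "real \<Rightarrow> 'a \<Rightarrow> real^'d"
    and V :: "nat \<Rightarrow> nat \<Rightarrow> 'a \<Rightarrow> real^'d"
    and L0 :: "real \<Rightarrow> 'a \<Rightarrow> real^'d^'d"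
    and V0 :: "real \<Rightarrow> 'a \<Rightarrow> real^'d"
    and h :: "nat \<Rightarrow> real" and tt :: "nat \<Rightarrow> nat \<Rightarrow> real"
  assumes P: "prob_space M"
    and tT: "t0 < T"
    and MM: "MM \<ge> 1"
    and gam: "\<gamma> = 0 \<or> \<gamma> = 1 / 2"
    and Wien: "\<And>m. m \<in> {1..MM} \<Longrightarrow> wiener_process_on M {t0..T} (W m)"
    and Windep: "prob_space.indep_vars M (\<lambda>_. Pi\<^sub>M {t0..T} (\<lambda>_. borel))
                    (\<lambda>m \<omega>. \<lambda>t\<in>{t0..T}. W m t \<omega>) {1..MM}"
    and comm: "\<And>i j. i \<le> MM \<Longrightarrow> j \<le> MM \<Longrightarrow> A i ** A j = A j ** A i"
    and Xmeas: "\<And>t. t \<in> {t0..T} \<Longrightarrow> X t \<in> borel_measurable M"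
    and h_def: "\<And>N. h N = (T - t0) / real N"
    and tt_def: "\<And>N n. tt N n = t0 + real n * h N"
    and L0_def: "\<And>t \<omega>. L0 t \<omega> =
        (t - t0) *\<^sub>R (A 0 - \<gamma> *\<^sub>R (\<Sum>m\<in>{1..MM}. A m ** A m))
        + (\<Sum>m\<in>{1..MM}. (W m t \<omega> - W m t0 \<omega>) *\<^sub>R A m)"
    and V0_def: "\<And>t \<omega>. V0 t \<omega> = mat_exp (- L0 t \<omega>) *v X t \<omega>"
    and Vmeas: "\<And>N n. N \<ge> 1 \<Longrightarrow> n \<le> N \<Longrightarrow> V N n \<in> borel_measurable M"
    and order: "\<exists>c::real. \<forall>N\<ge>1. \<forall>n\<le>N.
        integrable M (\<lambda>\<omega>. (norm (V N n \<omega> - V0 (tt N n) \<omega>))\<^sup>2) \<and>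
        sqrt (\<integral>\<omega>. (norm (V N n \<omega> - V0 (tt N n) \<omega>))\<^sup>2 \<partial>M) \<le> c * h N powr p"
  shows "\<exists>c'::real. \<forall>N\<ge>1. \<forall>n\<le>N.
        (\<integral>\<^sup>+\<omega>. ennreal (norm (mat_exp (L0 (tt N n) \<omega>) *v V N n \<omega> - X (tt N n) \<omega>)) \<partial>M)
          \<le> ennreal (c' * h N powr p)"
proof -
  obtain c where c: "\<forall>N\<ge>1. \<forall>n\<le>N.
        integrable M (\<lambda>\<omega>. (norm (V N n \<omega> - V0 (tt N n) \<omega>))\<^sup>2) \<and>
        sqrt (\<integral>\<omega>. (norm (V N n \<omega> - V0 (tt N n) \<omega>))\<^sup>2 \<partial>M) \<le> c * h N powr p"
    using order by blast
  define \<beta> where "\<beta> = (T - t0) * norm (A 0 - \<gamma> *\<^sub>R (\<Sum>m\<in>{1..MM}. A m ** A m))"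
  define K where "K = (\<Sum>m\<in>{1..MM}. sqrt 2 * exp ((real MM * (2 * norm (A m)))\<^sup>2 * (T - t0)))"
  have K: "0 \<le> K"
    unfolding K_def by (intro sum_nonneg) simp
  show ?thesis
  proof (intro exI[of _ "norm (mat 1 :: real^'d^'d) * exp \<beta> * sqrt K * c"] allI impI)
    fix N n :: nat
    assume N: "1 \<le> N" "n \<le> N"
    define t where "t = tt N n"
    have t: "t \<in> {t0..T}"
      unfolding t_def tt_def h_def using tT N by (rule grid_point_mem_interval)
    define S where "S \<omega> = (\<Sum>m\<in>{1..MM}. norm (A m) * \<bar>W m t \<omega> - W m t0 \<omega>\<bar>)" for \<omega>
    have "S \<in> borel_measurable M"
      unfolding S_def[abs_def]
      by (intro borel_measurable_sum borel_measurable_times borel_measurable_const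
          borel_measurable_abs_wiener_increment[where T = T] Wien t)
    moreover have "norm (L0 t \<omega>) \<le> \<beta> + S \<omega>" for \<omega>
      unfolding L0_def \<beta>_def S_def
      by (rule order_trans[OF norm_scaleR_add_sum_scaleR_le]) (use t in \<open>auto intro: mult_right_mono\<close>)
    moreover have "(\<integral>\<^sup>+\<omega>. ennreal (exp (2 * S \<omega>)) \<partial>M) \<le> ennreal K"
      using nn_integral_exp_sum_abs_wiener_increments_le[of "{1..MM}" M t0 T W t "\<lambda>m. 2 * norm (A m)"] MM Wien t
      by (simp add: K_def S_def sum_distrib_left mult.assoc)
    ultimately show "(\<integral>\<^sup>+\<omega>. ennreal (norm (mat_exp (L0 (tt N n) \<omega>) *v V N n \<omega> - X (tt N n) \<omega>)) \<partial>M)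
        \<le> ennreal (norm (mat 1 :: real^'d^'d) * exp \<beta> * sqrt K * c * h N powr p)"
      using nn_integral_mat_exp_transform_error_le[of S M "L0 t" \<beta> K] K c N
      by (simp add: t_def V0_def mult.assoc)
  qed
qed

end
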